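(* Consider the group $G^2_3=\langle a,b,c\mid a^2=b^2=c^2=1,\ bca=acb,\ cab=bac,\ cba=abc\rangle$, which as a monoid (semigroup with identity) has the same presentation. Let $<$ be the deg-lex order on $\{a,b,c\}^*$ with $a<b<c$. Then the set $R'\subseteq\mathbb{F}\langle a,b,c\rangle$ consisting of (i) $x^2-1$ for $x\in\{a,b,c\}$; (ii) $bca-acb$; (iii) $cab-bac$; (iv) $cba-abc$; (v) $b(ac)^mb-(ca)^m$ for all integers $m\ge1$, generates the same ideal as the defining relations of $G^2_3$ (so $\mathbb{F}G^2_3=\mathbb{F}\langle a,b,c\mid R'\rangle$), and $R'$ is a Gröbner–Shirshov basis with respect to $<$.
   Context: $G^2_3$ is the Manturov $(2,3)$-group with $a=a_{12}$, $b=a_{13}$, $c=a_{23}$. The deg-lex order compares words first by length, then lexicographically using $a<b<c$. $\overline g$ denotes the $<$-largest monomial of $g\neq 0$; $g$ is monic if that monomial has coefficient $1$. Gröbner–Shirshov basis: for monic $f,g$, if $w=\overline f b=a'\overline g$ with $a',b\in X^*$ and $|\overline f|+|\overline g|>|w|$, then $(f,g)_w=fb-a'g$ (intersection composition); if $w=\overline f=a'\overline g b$, then $(f,g)_w=f-a'gb$ (inclusion composition). For monic $S$, $p$ is trivial modulo $(S,w)$ if $p=\sum\alpha_i u_is_iv_i$ with $\alpha_i\in\mathbb{F}$, $u_i,v_i$ words, $s_i\in S$, $u_i\overline{s_i}v_i<w$. A monic set $S$ is a Gröbner–Shirshov basis if every composition of elements of $S$ is trivial modulo $(S,w)$. *)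

theory Defs
  imports Main
begin

datatype gen = A | B | C   (* a = a12, b = a13, c = a23 *)

type_synonym word = "gen list"

type_synonym 'k ncpoly = "word \<Rightarrow> 'k"

definition is_poly :: "'k::zero ncpoly \<Rightarrow> bool" where
  "is_poly p \<longleftrightarrow> finite {w. p w \<noteq> 0}"

definition monom :: "word \<Rightarrow> 'k::{zero,one} ncpoly" where
  "monom u = (\<lambda>w. if w = u then 1 else 0)"

definition binom :: "word \<Rightarrow> word \<Rightarrow> 'k::ring_1 ncpoly" where
  "binom u v = (\<lambda>w. monom u w - monom v w)"

definition wmul :: "word \<Rightarrow> 'k::zero ncpoly \<Rightarrow> word \<Rightarrow> 'k ncpoly" where
  "wmul u p v = (\<lambda>w. if (\<exists>x. w = u @ x @ v)
                        then p (THE x. w = u @ x @ v) else 0)"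

definition lincomb :: "('k::comm_ring_1 \<times> word \<times> 'k ncpoly \<times> word) list \<Rightarrow> 'k ncpoly" where
  "lincomb l = (\<lambda>w. \<Sum>(\<alpha>, u, s, v) \<leftarrow> l. \<alpha> * wmul u s v w)"

definition ideal_gen :: "'k::comm_ring_1 ncpoly set \<Rightarrow> 'k ncpoly set" where
  "ideal_gen S = {lincomb l | l. \<forall>(\<alpha>, u, s, v) \<in> set l. s \<in> S}"

fun rank :: "gen \<Rightarrow> nat" where
  "rank A = 0" | "rank B = 1" | "rank C = 2"

definition deglex_less :: "word \<Rightarrow> word \<Rightarrow> bool" where
  "deglex_less u v \<longleftrightarrow> (u, v) \<in> lenlex {(x, y). rank x < rank y}"

definition lead :: "'k::zero ncpoly \<Rightarrow> word" where
  "lead p = (THE w. p w \<noteq> 0 \<and> (\<forall>w'. p w' \<noteq> 0 \<longrightarrow> w' = w \<or> deglex_less w' w))"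

definition monic :: "'k::{zero,one} ncpoly \<Rightarrow> bool" where
  "monic p \<longleftrightarrow> is_poly p \<and> (\<exists>w. p w \<noteq> 0) \<and> p (lead p) = 1"

definition trivial_mod :: "'k::comm_ring_1 ncpoly set \<Rightarrow> word \<Rightarrow> 'k ncpoly \<Rightarrow> bool" where
  "trivial_mod S w p \<longleftrightarrow>
     (\<exists>l. p = lincomb l \<and>
          (\<forall>(\<alpha>, u, s, v) \<in> set l. s \<in> S \<and> deglex_less (u @ lead s @ v) w))"

definition GS_basis :: "'k::comm_ring_1 ncpoly set \<Rightarrow> bool" where
  "GS_basis S \<longleftrightarrow>
     (\<forall>f \<in> S. monic f) \<and>
     (\<forall>f \<in> S. \<forall>g \<in> S. \<forall>a' b' w.
        (w = lead f @ b' \<and> w = a' @ lead g \<and>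
         length (lead f) + length (lead g) > length w)
        \<longrightarrow> trivial_mod S w (\<lambda>x. wmul [] f b' x - wmul a' g [] x)) \<and>
     (\<forall>f \<in> S. \<forall>g \<in> S. \<forall>a' b' w.
        (w = lead f \<and> w = a' @ lead g @ b')
        \<longrightarrow> trivial_mod S w (\<lambda>x. f x - wmul a' g b' x))"

definition R_G23 :: "'k::comm_ring_1 ncpoly set" where
  "R_G23 = {binom [A,A] [], binom [B,B] [], binom [C,C] [],
            binom [B,C,A] [A,C,B], binom [C,A,B] [B,A,C], binom [C,B,A] [A,B,C]}"

definition R'_G23 :: "'k::comm_ring_1 ncpoly set" where
  "R'_G23 = R_G23 \<union>
     {binom ([B] @ concat (replicate m [A,C]) @ [B]) (concat (replicate m [C,A])) | m::nat. m \<ge> 1}"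

end

theory Submission
  imports Defs
begin

text \<open>
  Every element of R' is a binomial l - r with r < l, i.e. a rule l \<rightarrow> r of a string rewriting
  system. For such systems both kinds of compositions are binomials x - y with x, y < w, and
  x - y is trivial modulo (R', w) as soon as x and y rewrite to a common word, since every
  rewrite step only passes through smaller words. So R' is a Groebner-Shirshov basis once all
  critical pairs of overlapping and nested left-hand sides are joinable. Among the rules (i)-(iv)
  this is a finite computation. For the pairs involving b(ac)^m b, the rules bca \<rightarrow> acb and
  cab \<rightarrow> bac move b through (ca)^k and (ac)^k, and a^2 = c^2 = 1 cancels (ac)^m (ca)^k; no
  left-hand side is a proper factor of another. Finally (v) lies in the ideal of the defining
  relations because b(ac)^m b and (ca)^m both arise from (ca)^m bb, by cab \<rightarrow> bac and b^2 = 1.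
\<close>

section \<open>Noncommutative polynomials\<close>

lemma deglex_irrefl: "\<not> deglex_less x x"
  unfolding deglex_less_def by (rule lenlex_irreflexive) auto

lemma deglex_trans: "deglex_less x y \<Longrightarrow> deglex_less y z \<Longrightarrow> deglex_less x z"
  unfolding deglex_less_def by (rule lenlex_transI[THEN transD]) (auto simp: trans_def)

lemma deglex_append_mono: "deglex_less x y \<Longrightarrow> deglex_less (u @ x @ v) (u @ y @ v)"
  unfolding deglex_less_def
  by (simp add: lenlex_append1 irrefl_def flip: append_assoc)

lemma wmul_append_append [simp]: "wmul u p v (u @ x @ v) = p x"
  unfolding wmul_def by auto

lemma wmul_eq_0: "\<forall>x. w \<noteq> u @ x @ v \<Longrightarrow> wmul u p v w = 0"
  unfolding wmul_def by auto

lemma wmul_Nil_Nil [simp]: "wmul [] p [] = p"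
  by (rule ext) (metis append.left_neutral append_Nil2 wmul_append_append)

lemma wmul_wmul: "wmul u (wmul u' p v') v = wmul (u @ u') p (v' @ v)"
proof
  fix w
  show "wmul u (wmul u' p v') v w = wmul (u @ u') p (v' @ v) w"
  proof (cases "\<exists>y. w = u @ (u' @ y @ v') @ v")
    case True
    then show ?thesis by (metis append.assoc wmul_append_append)
  next
    case False
    then have "\<forall>x. w = u @ x @ v \<longrightarrow> (\<forall>y. x \<noteq> u' @ y @ v')" by blast
    with False show ?thesis unfolding wmul_def by auto
  qed
qed

lemma wmul_lincomb:
  "wmul u (lincomb l) v = lincomb (map (\<lambda>(\<alpha>, u', s, v'). (\<alpha>, u @ u', s, v' @ v)) l)"
proof
  fix w
  have "wmul u (lincomb l) v w = (\<Sum>(\<alpha>, u', s, v') \<leftarrow> l. \<alpha> * wmul u (wmul u' s v') v w)"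
    unfolding lincomb_def wmul_def by (induction l) (auto simp: algebra_simps)
  then show "wmul u (lincomb l) v w = lincomb (map (\<lambda>(\<alpha>, u', s, v'). (\<alpha>, u @ u', s, v' @ v)) l) w"
    unfolding lincomb_def wmul_wmul by (simp add: comp_def split_def)
qed

lemma binom_refl [simp]: "binom x x = (\<lambda>_. 0)"
  by (rule ext) (simp add: binom_def)

lemma binom_trans: "binom x z = (\<lambda>w. binom x y w + binom y z w)"
  by (rule ext) (simp add: binom_def)

lemma binom_sym: "binom y x = (\<lambda>w. - 1 * binom x y w)"
  by (rule ext) (simp add: binom_def)

lemma binom_diff: "binom x y = (\<lambda>w. binom x z w - binom y z w)"
  by (rule ext) (simp add: binom_def)

lemma wmul_binom: "wmul u (binom l r :: 'k::ring_1 ncpoly) v = binom (u @ l @ v) (u @ r @ v)"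
proof
  fix w
  show "wmul u (binom l r :: 'k ncpoly) v w = binom (u @ l @ v) (u @ r @ v) w"
    by (cases "\<exists>x. w = u @ x @ v") (auto simp: wmul_eq_0 binom_def monom_def split: if_splits)
qed

lemma binom_neq_0_iff:
  "(binom l r :: 'k::ring_1 ncpoly) w \<noteq> 0 \<longleftrightarrow> l \<noteq> r \<and> (w = l \<or> w = r)"
  by (auto simp: binom_def monom_def)

lemma lead_binom:
  assumes "deglex_less r l"
  shows "lead (binom l r :: 'k::ring_1 ncpoly) = l"
  unfolding lead_def
proof (rule the_equality)
  show "(binom l r :: 'k ncpoly) l \<noteq> 0 \<and>
      (\<forall>w'. (binom l r :: 'k ncpoly) w' \<noteq> 0 \<longrightarrow> w' = l \<or> deglex_less w' l)"
    using assms deglex_irrefl by (auto simp: binom_neq_0_iff)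
next
  fix w assume "(binom l r :: 'k ncpoly) w \<noteq> 0 \<and>
      (\<forall>w'. (binom l r :: 'k ncpoly) w' \<noteq> 0 \<longrightarrow> w' = w \<or> deglex_less w' w)"
  then show "w = l"
    using assms deglex_trans deglex_irrefl by (metis binom_neq_0_iff)
qed

lemma monic_binom:
  assumes "deglex_less r l"
  shows "monic (binom l r :: 'k::ring_1 ncpoly)"
proof -
  have "{w. (binom l r :: 'k ncpoly) w \<noteq> 0} \<subseteq> {l, r}"
    by (auto simp: binom_neq_0_iff)
  then have "is_poly (binom l r :: 'k ncpoly)"
    unfolding is_poly_def by (rule finite_subset) simp
  moreover have "l \<noteq> r" using assms deglex_irrefl by blast
  ultimately show ?thesis
    unfolding monic_def lead_binom[OF assms] by (auto simp: binom_def monom_def)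
qed

definition lincomb_span :: "(word \<Rightarrow> 'k ncpoly \<Rightarrow> word \<Rightarrow> bool) \<Rightarrow> 'k::comm_ring_1 ncpoly set" where
  "lincomb_span P = {lincomb l | l. \<forall>(\<alpha>, u, s, v) \<in> set l. P u s v}"

lemma ideal_gen_eq_lincomb_span: "ideal_gen T = lincomb_span (\<lambda>_ s _. s \<in> T)"
  unfolding ideal_gen_def lincomb_span_def ..

lemma trivial_mod_iff_lincomb_span:
  "trivial_mod S w p \<longleftrightarrow> p \<in> lincomb_span (\<lambda>u s v. s \<in> S \<and> deglex_less (u @ lead s @ v) w)"
  unfolding trivial_mod_def lincomb_span_def by blast

lemma zero_mem_lincomb_span: "(\<lambda>_. 0) \<in> lincomb_span P"
  unfolding lincomb_span_def lincomb_def by (rule CollectI, rule exI[of _ "[]"]) simp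

lemma wmul_mem_lincomb_span: "P u s v \<Longrightarrow> wmul u s v \<in> lincomb_span P"
  unfolding lincomb_span_def lincomb_def by (rule CollectI, rule exI[of _ "[(1, u, s, v)]"]) simp

lemma add_mem_lincomb_span:
  assumes "p \<in> lincomb_span P" "q \<in> lincomb_span P"
  shows "(\<lambda>w. p w + q w) \<in> lincomb_span P"
proof -
  obtain l1 l2 where "p = lincomb l1" "q = lincomb l2"
    "\<forall>(\<alpha>, u, s, v) \<in> set l1. P u s v" "\<forall>(\<alpha>, u, s, v) \<in> set l2. P u s v"
    using assms unfolding lincomb_span_def by blast
  then show ?thesis
    unfolding lincomb_span_def lincomb_def by (intro CollectI exI[of _ "l1 @ l2"]) auto
qed

lemma smult_mem_lincomb_span:
  assumes "p \<in> lincomb_span P"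
  shows "(\<lambda>w. c * p w) \<in> lincomb_span P"
proof -
  obtain l where l: "p = lincomb l" "\<forall>(\<alpha>, u, s, v) \<in> set l. P u s v"
    using assms unfolding lincomb_span_def by blast
  let ?l = "map (\<lambda>(\<alpha>, u, s, v). (c * \<alpha>, u, s, v)) l"
  have "(\<lambda>w. c * p w) = lincomb ?l"
    unfolding l(1) lincomb_def by (rule ext, induction l) (auto simp: algebra_simps)
  moreover have "\<forall>(\<alpha>, u, s, v) \<in> set ?l. P u s v"
    using l(2) by auto
  ultimately show ?thesis unfolding lincomb_span_def by blast
qed

lemma diff_mem_lincomb_span:
  assumes "p \<in> lincomb_span P" "q \<in> lincomb_span P"
  shows "(\<lambda>w. p w - q w) \<in> lincomb_span P"
  using add_mem_lincomb_span[OF assms(1) smult_mem_lincomb_span[OF assms(2), of "-1"]] by simp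

lemma zero_mem_ideal_gen: "(\<lambda>_. 0) \<in> ideal_gen T"
  unfolding ideal_gen_eq_lincomb_span by (rule zero_mem_lincomb_span)

lemma add_mem_ideal_gen: "p \<in> ideal_gen T \<Longrightarrow> q \<in> ideal_gen T \<Longrightarrow> (\<lambda>w. p w + q w) \<in> ideal_gen T"
  unfolding ideal_gen_eq_lincomb_span by (rule add_mem_lincomb_span)

lemma smult_mem_ideal_gen: "p \<in> ideal_gen T \<Longrightarrow> (\<lambda>w. c * p w) \<in> ideal_gen T"
  unfolding ideal_gen_eq_lincomb_span by (rule smult_mem_lincomb_span)

lemma mem_ideal_gen: "s \<in> T \<Longrightarrow> s \<in> ideal_gen T"
  using wmul_mem_lincomb_span[of "\<lambda>_ s _. s \<in> T" "[]" s "[]"]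
  by (simp add: ideal_gen_eq_lincomb_span)

lemma wmul_mem_ideal_gen:
  assumes "p \<in> ideal_gen T"
  shows "wmul u p v \<in> ideal_gen T"
proof -
  obtain l where "p = lincomb l" "\<forall>(\<alpha>, u, s, v) \<in> set l. s \<in> T"
    using assms unfolding ideal_gen_def by blast
  then show ?thesis
    unfolding ideal_gen_def
    by (intro CollectI exI[of _ "map (\<lambda>(\<alpha>, u', s, v'). (\<alpha>, u @ u', s, v' @ v)) l"])
      (auto simp: wmul_lincomb)
qed

lemma ideal_gen_mono: "S \<subseteq> T \<Longrightarrow> ideal_gen S \<subseteq> ideal_gen T"
  unfolding ideal_gen_def by fastforce

lemma ideal_gen_subset:
  assumes "S \<subseteq> ideal_gen T"
  shows "ideal_gen S \<subseteq> ideal_gen T"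
proof
  fix p assume "p \<in> ideal_gen S"
  then obtain l where "p = lincomb l" "\<forall>(\<alpha>, u, s, v) \<in> set l. s \<in> S"
    unfolding ideal_gen_def by blast
  then show "p \<in> ideal_gen T"
  proof (induction l arbitrary: p)
    case Nil
    then show ?case
      using zero_mem_ideal_gen by (simp add: lincomb_def)
  next
    case (Cons x l)
    obtain \<alpha> u s v where x: "x = (\<alpha>, u, s, v)" by (cases x)
    have "wmul u s v \<in> ideal_gen T"
      using Cons.prems(2) assms x by (auto intro: wmul_mem_ideal_gen)
    then have "(\<lambda>w. \<alpha> * wmul u s v w + lincomb l w) \<in> ideal_gen T"
      using Cons by (auto intro!: add_mem_ideal_gen smult_mem_ideal_gen)
    then show ?case using Cons.prems(1) x by (simp add: lincomb_def)
  qed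
qed

lemma trivial_mod_zero: "trivial_mod S w (\<lambda>_. 0)"
  unfolding trivial_mod_iff_lincomb_span by (rule zero_mem_lincomb_span)

lemma trivial_mod_wmul: "s \<in> S \<Longrightarrow> deglex_less (u @ lead s @ v) w \<Longrightarrow> trivial_mod S w (wmul u s v)"
  unfolding trivial_mod_iff_lincomb_span by (rule wmul_mem_lincomb_span) simp

lemma trivial_mod_add:
  "trivial_mod S w p \<Longrightarrow> trivial_mod S w q \<Longrightarrow> trivial_mod S w (\<lambda>x. p x + q x)"
  unfolding trivial_mod_iff_lincomb_span by (rule add_mem_lincomb_span)

lemma trivial_mod_diff:
  "trivial_mod S w p \<Longrightarrow> trivial_mod S w q \<Longrightarrow> trivial_mod S w (\<lambda>x. p x - q x)"
  unfolding trivial_mod_iff_lincomb_span by (rule diff_mem_lincomb_span)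

section \<open>Rewriting systems of binomials\<close>

definition binoms :: "(word \<times> word) set \<Rightarrow> 'k::ring_1 ncpoly set" where
  "binoms rs = (\<lambda>(l, r). binom l r) ` rs"

definition rewrite_step :: "(word \<times> word) set \<Rightarrow> word \<Rightarrow> word \<Rightarrow> bool" where
  "rewrite_step rs x y \<longleftrightarrow> (\<exists>u v l r. (l, r) \<in> rs \<and> x = u @ l @ v \<and> y = u @ r @ v)"

abbreviation reduces :: "(word \<times> word) set \<Rightarrow> word \<Rightarrow> word \<Rightarrow> bool" where
  "reduces rs \<equiv> (rewrite_step rs)\<^sup>*\<^sup>*"

definition joinable :: "(word \<times> word) set \<Rightarrow> word \<Rightarrow> word \<Rightarrow> bool" where
  "joinable rs x y \<longleftrightarrow> (\<exists>z. reduces rs x z \<and> reduces rs y z)"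

lemma joinableI: "reduces rs x z \<Longrightarrow> reduces rs y z \<Longrightarrow> joinable rs x y"
  unfolding joinable_def by blast

lemma binom_mem_binoms: "(l, r) \<in> rs \<Longrightarrow> binom l r \<in> binoms rs"
  unfolding binoms_def by (erule rev_image_eqI) simp

lemma reduces_by_rule: "(l, r) \<in> rs \<Longrightarrow> reduces rs (u @ l @ v) (u @ r @ v)"
  unfolding rewrite_step_def by blast

lemma reduces_in_context: "reduces rs x y \<Longrightarrow> reduces rs (u @ x @ v) (u @ y @ v)"
proof (induction rule: rtranclp_induct)
  case (step y z)
  from step(2) obtain u' v' l r where "(l, r) \<in> rs" "y = u' @ l @ v'" "z = u' @ r @ v'"
    unfolding rewrite_step_def by blast
  then have "rewrite_step rs (u @ y @ v) (u @ z @ v)"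
    unfolding rewrite_step_def
    by (intro exI[of _ "u @ u'"] exI[of _ "v' @ v"] exI[of _ l] exI[of _ r]) simp
  with step(3) show ?case by simp
qed simp

lemma reduces_Cons: "reduces rs x y \<Longrightarrow> reduces rs (c # x) (c # y)"
  using reduces_in_context[of rs x y "[c]" "[]"] by simp

lemma binom_mem_ideal_gen_if_reduces:
  assumes "reduces rs x y"
  shows "(binom x y :: 'k::comm_ring_1 ncpoly) \<in> ideal_gen (binoms rs)"
  using assms
proof (induction rule: rtranclp_induct)
  case base
  show ?case by (simp add: zero_mem_ideal_gen)
next
  case (step y z)
  from step(2) obtain u v l r where "(l, r) \<in> rs" "y = u @ l @ v" "z = u @ r @ v"
    unfolding rewrite_step_def by blast
  then have "(binom y z :: 'k ncpoly) \<in> ideal_gen (binoms rs)"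
    using wmul_mem_ideal_gen[OF mem_ideal_gen[OF binom_mem_binoms]] by (metis wmul_binom)
  with step(3) show ?case
    by (subst binom_trans) (rule add_mem_ideal_gen)
qed

lemma append_overlapE:
  assumes "x @ v = u @ y" "length (x @ v) < length x + length y"
  obtains s where "x = u @ s" "y = s @ v" "s \<noteq> []"
proof -
  obtain s where "x = u @ s \<and> s @ v = y \<or> x @ s = u \<and> v = s @ y"
    using assms(1) unfolding append_eq_append_conv2 by blast
  with assms(2) show thesis by (auto intro: that)
qed

context
  fixes rs :: "(word \<times> word) set"
  assumes rules_decrease: "\<And>l r. (l, r) \<in> rs \<Longrightarrow> deglex_less r l"
begin

lemma rewrite_step_deglex_less: "rewrite_step rs x y \<Longrightarrow> deglex_less y x"
  unfolding rewrite_step_def using rules_decrease deglex_append_mono by blast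

lemma binomsE:
  assumes "f \<in> (binoms rs :: 'k::ring_1 ncpoly set)"
  obtains l r where "(l, r) \<in> rs" "f = binom l r" "lead f = l"
proof -
  from assms obtain l r where "(l, r) \<in> rs" "f = binom l r"
    unfolding binoms_def by auto
  moreover have "lead f = l"
    using calculation rules_decrease lead_binom by blast
  ultimately show thesis by (rule that)
qed

lemma trivial_mod_binom_if_reduces:
  assumes "reduces rs x z" "deglex_less x w"
  shows "trivial_mod (binoms rs :: 'k::comm_ring_1 ncpoly set) w (binom x z)"
  using assms
proof (induction rule: converse_rtranclp_induct)
  case base
  show ?case by (simp add: trivial_mod_zero)
next
  case (step x y)
  from step(1) obtain u v l r where lr: "(l, r) \<in> rs" "x = u @ l @ v" "y = u @ r @ v"
    unfolding rewrite_step_def by blast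
  have "lead (binom l r :: 'k ncpoly) = l"
    using lr(1) rules_decrease lead_binom by blast
  then have "trivial_mod (binoms rs) w (wmul u (binom l r :: 'k ncpoly) v)"
    using lr step(4) by (intro trivial_mod_wmul binom_mem_binoms) simp_all
  then have "trivial_mod (binoms rs) w (binom x y :: 'k ncpoly)"
    using lr(2,3) by (simp add: wmul_binom)
  moreover have "deglex_less y w"
    using rewrite_step_deglex_less[OF step(1)] step(4) deglex_trans by blast
  ultimately show ?case
    using step(3) by (subst binom_trans) (rule trivial_mod_add)
qed

lemma trivial_mod_binom_if_joinable:
  assumes "joinable rs x y" "deglex_less x w" "deglex_less y w"
  shows "trivial_mod (binoms rs :: 'k::comm_ring_1 ncpoly set) w (binom x y)"
proof -
  obtain z where "reduces rs x z" "reduces rs y z"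
    using assms(1) unfolding joinable_def by blast
  with assms(2,3) show ?thesis
    by (subst binom_diff) (intro trivial_mod_diff trivial_mod_binom_if_reduces)
qed

lemma GS_basis_binoms:
  assumes overlap_joinable: "\<And>l1 r1 l2 r2 u s v. (l1, r1) \<in> rs \<Longrightarrow> (l2, r2) \<in> rs \<Longrightarrow>
      l1 = u @ s \<Longrightarrow> l2 = s @ v \<Longrightarrow> s \<noteq> [] \<Longrightarrow> joinable rs (u @ r2) (r1 @ v)"
    and inclusion_joinable: "\<And>l1 r1 l2 r2 u v. (l1, r1) \<in> rs \<Longrightarrow> (l2, r2) \<in> rs \<Longrightarrow>
      l1 = u @ l2 @ v \<Longrightarrow> joinable rs (u @ r2 @ v) r1"
  shows "GS_basis (binoms rs :: 'k::comm_ring_1 ncpoly set)"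
  unfolding GS_basis_def
proof (intro conjI ballI allI impI)
  fix f :: "'k ncpoly"
  assume "f \<in> binoms rs"
  then show "monic f"
    by (metis binomsE monic_binom rules_decrease)
next
  fix f g :: "'k ncpoly" and u v w
  assume "f \<in> binoms rs" "g \<in> binoms rs"
    and w: "w = lead f @ v \<and> w = u @ lead g \<and> length w < length (lead f) + length (lead g)"
  then obtain l1 r1 l2 r2 where f: "(l1, r1) \<in> rs" "f = binom l1 r1" "lead f = l1"
    and g: "(l2, r2) \<in> rs" "g = binom l2 r2" "lead g = l2"
    by (metis binomsE)
  with w obtain s where s: "l1 = u @ s" "l2 = s @ v" "s \<noteq> []"
    by (metis append_overlapE)
  have "(\<lambda>x. wmul [] f v x - wmul u g [] x) = binom (u @ r2) (r1 @ v)"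
    unfolding f(2) g(2) wmul_binom by (rule ext) (simp add: binom_def s)
  moreover have "deglex_less (u @ r2) w" "deglex_less (r1 @ v) w"
    using deglex_append_mono[OF rules_decrease[OF g(1)], of u "[]"]
      deglex_append_mono[OF rules_decrease[OF f(1)], of "[]" v] w f(3) g(3) by auto
  ultimately show "trivial_mod (binoms rs) w (\<lambda>x. wmul [] f v x - wmul u g [] x)"
    using trivial_mod_binom_if_joinable overlap_joinable[OF f(1) g(1) s] by simp
next
  fix f g :: "'k ncpoly" and u v w
  assume "f \<in> binoms rs" "g \<in> binoms rs" and w: "w = lead f \<and> w = u @ lead g @ v"
  then obtain l1 r1 l2 r2 where f: "(l1, r1) \<in> rs" "f = binom l1 r1" "lead f = l1"
    and g: "(l2, r2) \<in> rs" "g = binom l2 r2" "lead g = l2"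
    by (metis binomsE)
  with w have l1: "l1 = u @ l2 @ v" by metis
  have "(\<lambda>x. f x - wmul u g v x) = binom (u @ r2 @ v) r1"
    unfolding f(2) g(2) wmul_binom by (rule ext) (simp add: binom_def l1)
  moreover have "deglex_less (u @ r2 @ v) w" "deglex_less r1 w"
    using deglex_append_mono[OF rules_decrease[OF g(1)]] rules_decrease[OF f(1)] w f(3) g(3)
    by auto
  ultimately show "trivial_mod (binoms rs) w (\<lambda>x. f x - wmul u g v x)"
    using trivial_mod_binom_if_joinable inclusion_joinable[OF f(1) g(1) l1] by simp
qed

end

definition ac :: "nat \<Rightarrow> word" where
  "ac m = concat (replicate m [A, C])"

definition ca :: "nat \<Rightarrow> word" where
  "ca m = concat (replicate m [C, A])"

lemma ac_0 [simp]: "ac 0 = []" and ac_Suc [simp]: "ac (Suc m) = A # C # ac m"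
  by (simp_all add: ac_def)

lemma ca_0 [simp]: "ca 0 = []" and ca_Suc [simp]: "ca (Suc m) = C # A # ca m"
  by (simp_all add: ca_def)

lemma ac_append_AC [simp]: "ac m @ A # C # w = A # C # ac m @ w"
  by (induction m) simp_all

lemma ca_append_CA [simp]: "ca m @ C # A # w = C # A # ca m @ w"
  by (induction m) simp_all

lemma length_ac [simp]: "length (ac m) = 2 * m"
  by (induction m) simp_all

lemma length_ca [simp]: "length (ca m) = 2 * m"
  by (induction m) simp_all

lemma B_notin_ac: "B \<notin> set (ac m)"
  by (induction m) simp_all

lemma nth_ac: "i < 2 * m \<Longrightarrow> ac m ! i = (if even i then A else C)"
proof (induction m arbitrary: i)
  case (Suc m)
  then show ?case by (auto simp: nth_Cons')
qed simp

definition G23_base_rules :: "(word \<times> word) set" where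
  "G23_base_rules = {([A, A], []), ([B, B], []), ([C, C], []),
     ([B, C, A], [A, C, B]), ([C, A, B], [B, A, C]), ([C, B, A], [A, B, C])}"

definition G23_rules :: "(word \<times> word) set" where
  "G23_rules = G23_base_rules \<union> {(B # ac m @ [B], ca m) | m. 1 \<le> m}"

lemma G23_base_rules_subset: "G23_base_rules \<subseteq> G23_rules"
  unfolding G23_rules_def by blast

lemma family_rule_mem_G23_rules: "1 \<le> m \<Longrightarrow> (B # ac m @ [B], ca m) \<in> G23_rules"
  unfolding G23_rules_def by (intro UnI2 CollectI exI[of _ m]) simp

lemma G23_rules_cases [consumes 1, case_names base family]:
  assumes "(l, r) \<in> G23_rules"
  obtains "(l, r) \<in> G23_base_rules"
  | m where "1 \<le> m" "l = B # ac m @ [B]" "r = ca m"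
  using assms unfolding G23_rules_def by blast

lemma length_base_lhs: "(l, r) \<in> G23_base_rules \<Longrightarrow> length l \<le> 3"
  unfolding G23_base_rules_def by auto

lemma R_G23_eq_binoms: "R_G23 = binoms G23_base_rules"
  by (simp add: R_G23_def G23_base_rules_def binoms_def)

lemma R'_G23_eq_binoms: "R'_G23 = binoms G23_rules"
  by (auto simp: R'_G23_def R_G23_eq_binoms G23_rules_def binoms_def ac_def ca_def)

lemma G23_rules_decrease: "(l, r) \<in> G23_rules \<Longrightarrow> deglex_less r l"
  by (auto simp: G23_rules_def G23_base_rules_def deglex_less_def lenlex_conv)

context
  fixes rs :: "(word \<times> word) set"
  assumes base_rules: "G23_base_rules \<subseteq> rs"
begin

lemma reduces_by_base_rule: "(l, r) \<in> G23_base_rules \<Longrightarrow> reduces rs (u @ l @ v) (u @ r @ v)"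
  using base_rules by (auto intro: reduces_by_rule)

lemma reduces_AA: "reduces rs (u @ [A, A] @ v) (u @ v)"
  using reduces_by_base_rule[of "[A, A]" "[]" u v] by (simp add: G23_base_rules_def)

lemma reduces_BB: "reduces rs (u @ [B, B] @ v) (u @ v)"
  using reduces_by_base_rule[of "[B, B]" "[]" u v] by (simp add: G23_base_rules_def)

lemma reduces_CC: "reduces rs (u @ [C, C] @ v) (u @ v)"
  using reduces_by_base_rule[of "[C, C]" "[]" u v] by (simp add: G23_base_rules_def)

lemma reduces_BCA: "reduces rs (u @ [B, C, A] @ v) (u @ [A, C, B] @ v)"
  using reduces_by_base_rule[of "[B, C, A]" "[A, C, B]" u v] by (simp add: G23_base_rules_def)

lemma reduces_CAB: "reduces rs (u @ [C, A, B] @ v) (u @ [B, A, C] @ v)"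
  using reduces_by_base_rule[of "[C, A, B]" "[B, A, C]" u v] by (simp add: G23_base_rules_def)

lemma reduces_CBA: "reduces rs (u @ [C, B, A] @ v) (u @ [A, B, C] @ v)"
  using reduces_by_base_rule[of "[C, B, A]" "[A, B, C]" u v] by (simp add: G23_base_rules_def)

lemma reduces_B_ca: "reduces rs (B # ca k) (ac k @ [B])"
proof (induction k)
  case (Suc k)
  have "reduces rs (B # ca (Suc k)) (A # C # B # ca k)"
    using reduces_BCA[of "[]" "ca k"] by simp
  also have "reduces rs \<dots> (ac (Suc k) @ [B])"
    using reduces_in_context[OF Suc, of "[A, C]" "[]"] by simp
  finally show ?case .
qed simp

lemma reduces_ca_B: "reduces rs (ca k @ [B]) (B # ac k)"
proof (induction k)
  case (Suc k)
  have "reduces rs (ca (Suc k) @ [B]) (C # A # B # ac k)"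
    using reduces_in_context[OF Suc, of "[C, A]" "[]"] by simp
  also have "reduces rs \<dots> (B # ac (Suc k))"
    using reduces_CAB[of "[]" "ac k"] by simp
  finally show ?case .
qed simp

lemma reduces_ac_ca: "reduces rs (ac m @ ca k) (ac (m - k) @ ca (k - m))"
proof (induction m arbitrary: k)
  case (Suc m)
  show ?case
  proof (cases k)
    case (Suc k')
    have "reduces rs (ac (Suc m) @ ca k) (ac m @ [A] @ [A] @ ca k')"
      using reduces_CC[of "ac m @ [A]" "[A] @ ca k'"] Suc by simp
    also have "reduces rs \<dots> (ac m @ ca k')"
      using reduces_AA[of "ac m" "ca k'"] by simp
    also have "reduces rs \<dots> (ac (m - k') @ ca (k' - m))"
      by (rule Suc.IH)
    finally show ?thesis using Suc by simp
  qed simp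
qed simp

lemma reduces_ca_ac: "reduces rs (ca m @ ac k) (ca (m - k) @ ac (k - m))"
proof (induction m arbitrary: k)
  case (Suc m)
  show ?case
  proof (cases k)
    case (Suc k')
    have "reduces rs (ca (Suc m) @ ac k) (ca m @ [C] @ [C] @ ac k')"
      using reduces_AA[of "ca m @ [C]" "[C] @ ac k'"] Suc by simp
    also have "reduces rs \<dots> (ca m @ ac k')"
      using reduces_CC[of "ca m" "ac k'"] by simp
    also have "reduces rs \<dots> (ca (m - k') @ ac (k' - m))"
      by (rule Suc.IH)
    finally show ?thesis using Suc by simp
  qed simp
qed simp

end

lemma reduces_family_lhs: "reduces G23_rules (u @ (B # ac m @ [B]) @ v) (u @ ca m @ v)"
proof (cases "m = 0")
  case True
  then show ?thesis
    using reduces_BB[OF G23_base_rules_subset, of u v] by simp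
next
  case False
  then show ?thesis
    using reduces_by_rule[OF family_rule_mem_G23_rules, of m u v] by simp
qed

lemma binom_family_mem_ideal_gen_R_G23:
  "(binom (B # ac m @ [B]) (ca m) :: 'k::comm_ring_1 ncpoly) \<in> ideal_gen R_G23"
proof -
  let ?x = "ca m @ [B, B]"
  have "reduces G23_base_rules ?x (B # ac m @ [B])"
    using reduces_in_context[where u="[]" and v="[B]", OF reduces_ca_B[OF subset_refl]] by simp
  moreover have "reduces G23_base_rules ?x (ca m)"
    using reduces_BB[OF subset_refl, where u="ca m" and v="[]"] by simp
  ultimately have "(binom ?x (B # ac m @ [B]) :: 'k ncpoly) \<in> ideal_gen R_G23"
    "(binom ?x (ca m) :: 'k ncpoly) \<in> ideal_gen R_G23"
    unfolding R_G23_eq_binoms by (auto intro: binom_mem_ideal_gen_if_reduces)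
  then show ?thesis
    by (subst binom_trans[of _ _ ?x], subst binom_sym)
      (intro add_mem_ideal_gen smult_mem_ideal_gen)
qed

lemma ideal_gen_R_G23_eq: "ideal_gen (R_G23 :: 'k::comm_ring_1 ncpoly set) = ideal_gen R'_G23"
proof
  show "ideal_gen (R_G23 :: 'k ncpoly set) \<subseteq> ideal_gen R'_G23"
    by (rule ideal_gen_mono) (simp add: R'_G23_def)
  show "ideal_gen (R'_G23 :: 'k ncpoly set) \<subseteq> ideal_gen R_G23"
    by (rule ideal_gen_subset)
      (auto simp: R'_G23_def
        intro: mem_ideal_gen binom_family_mem_ideal_gen_R_G23[unfolded ac_def ca_def])
qed

section \<open>Critical pairs\<close>

text \<open>The last redex is rule (v) for m = 1; the critical pairs of bb with bca and of cab with bb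
  need it.\<close>

fun rewrite_leftmost :: "word \<Rightarrow> word" where
  "rewrite_leftmost (A # A # w) = w"
| "rewrite_leftmost (B # B # w) = w"
| "rewrite_leftmost (C # C # w) = w"
| "rewrite_leftmost (B # C # A # w) = A # C # B # w"
| "rewrite_leftmost (C # A # B # w) = B # A # C # w"
| "rewrite_leftmost (C # B # A # w) = A # B # C # w"
| "rewrite_leftmost (B # A # C # B # w) = C # A # w"
| "rewrite_leftmost (x # w) = x # rewrite_leftmost w"
| "rewrite_leftmost [] = []"

lemma reduces_rewrite_leftmost: "reduces G23_rules w (rewrite_leftmost w)"
proof (induction w rule: rewrite_leftmost.induct)
  case (7 w)
  from reduces_family_lhs[of "[]" 1 w] show ?case by simp
qed (use reduces_AA[OF G23_base_rules_subset, of "[]"] reduces_BB[OF G23_base_rules_subset, of "[]"]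
      reduces_CC[OF G23_base_rules_subset, of "[]"] reduces_BCA[OF G23_base_rules_subset, of "[]"]
      reduces_CAB[OF G23_base_rules_subset, of "[]"] reduces_CBA[OF G23_base_rules_subset, of "[]"]
    in \<open>simp_all add: reduces_Cons\<close>)

lemma joinable_if_rewrite_leftmost_iterates_eq:
  assumes "(rewrite_leftmost ^^ n) x = (rewrite_leftmost ^^ n) y"
  shows "joinable G23_rules x y"
proof -
  have "reduces G23_rules w ((rewrite_leftmost ^^ n) w)" for w
    by (induction n) (auto intro: rtranclp_trans reduces_rewrite_leftmost)
  with assms show ?thesis by (metis joinableI)
qed

lemma G23_base_overlap_joinable:
  assumes "(l1, r1) \<in> G23_base_rules" "(l2, r2) \<in> G23_base_rules"
    and "l1 = u @ s" "l2 = s @ v" "s \<noteq> []"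
  shows "joinable G23_rules (u @ r2) (r1 @ v)"
  using assms unfolding G23_base_rules_def
  by (auto simp: append_eq_Cons_conv Cons_eq_append_conv eval_nat_numeral
      intro!: joinable_if_rewrite_leftmost_iterates_eq[of 3])

lemma G23_base_family_overlap_joinable:
  assumes "(l1, r1) \<in> G23_base_rules" "l1 = u @ s" "B # ac k @ [B] = s @ v" "s \<noteq> []" "1 \<le> k"
  shows "joinable G23_rules (u @ ca k) (r1 @ v)"
proof -
  obtain j where k: "k = Suc j" using assms(5) by (cases k) auto
  have BB: "joinable G23_rules (B # C # A # ca j) (A # C # ac j @ [B])"
    using reduces_B_ca[OF G23_base_rules_subset, of "Suc j"] by (auto intro: joinableI)
  have CBA: "joinable G23_rules (C # C # A # ca j) (A # B # C # C # ac j @ [B])"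
  proof (rule joinableI)
    show "reduces G23_rules (C # C # A # ca j) (A # ca j)"
      using reduces_CC[OF G23_base_rules_subset, of "[]" "A # ca j"] by simp
    have "reduces G23_rules (A # B # C # C # ac j @ [B]) (A # B # ac j @ [B])"
      using reduces_CC[OF G23_base_rules_subset, of "[A, B]" "ac j @ [B]"] by simp
    also have "reduces G23_rules \<dots> (A # ca j)"
      using reduces_family_lhs[of "[A]" j "[]"] by simp
    finally show "reduces G23_rules (A # B # C # C # ac j @ [B]) (A # ca j)" .
  qed
  have CAB: "joinable G23_rules (C # A # C # A # ca j) (B # A # C # A # C # ac j @ [B])"
    using reduces_family_lhs[of "[]" "Suc (Suc j)" "[]"] by (auto intro: joinableI)
  show ?thesis
    using assms(1-4) BB CBA CAB unfolding G23_base_rules_def k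
    by (auto simp: append_eq_Cons_conv Cons_eq_append_conv)
qed

lemma append_eq_append_shorter_suffixE:
  assumes "u @ s = x @ y" "length s \<le> length y"
  obtains t where "u = x @ t" "y = t @ s"
  using assms by (auto simp: append_eq_append_conv2 intro: that)

lemma G23_family_base_overlap_joinable:
  assumes "(l2, r2) \<in> G23_base_rules" "B # ac k @ [B] = u @ s" "l2 = s @ v" "s \<noteq> []" "1 \<le> k"
  shows "joinable G23_rules (u @ r2) (ca k @ v)"
proof -
  obtain j where k: "k = Suc j" using assms(5) by (cases k) auto
  have "length s \<le> length [A, C, B]"
    using length_base_lhs[OF assms(1)] assms(3) by simp
  moreover have "u @ s = (B # ac j) @ [A, C, B]"
    using assms(2) by (simp add: k)
  ultimately obtain t where t: "u = (B # ac j) @ t" "[A, C, B] = t @ s"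
    by (metis append_eq_append_shorter_suffixE)
  have BB: "joinable G23_rules (B # ac j @ [A, C]) (C # A # ca j @ [B])"
    using reduces_ca_B[OF G23_base_rules_subset, of "Suc j"] by (auto intro: joinableI)
  have BCA: "joinable G23_rules (B # ac j @ [A, C, A, C, B]) (C # A # ca j @ [C, A])"
    using reduces_family_lhs[of "[]" "Suc (Suc j)" "[]"] by (auto intro: joinableI)
  have CBA: "joinable G23_rules (B # ac j @ [A, A, B, C]) (C # A # ca j @ [A])"
  proof (rule joinableI)
    have "reduces G23_rules (B # ac j @ [A, A, B, C]) (B # ac j @ [B, C])"
      using reduces_AA[OF G23_base_rules_subset, of "B # ac j" "[B, C]"] by simp
    also have "reduces G23_rules \<dots> (ca j @ [C])"
      using reduces_family_lhs[of "[]" j "[C]"] by simp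
    finally show "reduces G23_rules (B # ac j @ [A, A, B, C]) (ca j @ [C])" .
    show "reduces G23_rules (C # A # ca j @ [A]) (ca j @ [C])"
      using reduces_AA[OF G23_base_rules_subset, of "ca j @ [C]" "[]"] by simp
  qed
  show ?thesis
    using assms(1,3,4) t BB BCA CBA unfolding G23_base_rules_def k
    by (auto simp: Cons_eq_append_conv)
qed

lemma snoc_eq_append_Cons_if_notin:
  assumes "x \<notin> set ys" "ys @ [x] = zs @ x # ws"
  shows "ws = [] \<and> zs = ys"
proof (cases ws rule: rev_cases)
  case (snoc ws' y)
  with assms have "ys = zs @ x # ws'" by simp
  with assms(1) show ?thesis by simp
qed (use assms(2) in simp)

lemma joinable_B_ac_ca: "joinable G23_rules (B # ac m @ ca k) (ca m @ ac k @ [B])"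
proof (cases "k \<le> m")
  case True
  have "reduces G23_rules (ca m @ ac k @ [B]) (ca (m - k) @ [B])"
    using reduces_in_context[OF reduces_ca_ac[OF G23_base_rules_subset, of m k], of "[]" "[B]"] True
    by simp
  also have "reduces G23_rules \<dots> (B # ac (m - k))"
    by (rule reduces_ca_B[OF G23_base_rules_subset])
  finally show ?thesis
    using reduces_Cons[OF reduces_ac_ca[OF G23_base_rules_subset, of m k], of B] True
    by (auto intro: joinableI)
next
  case False
  have "reduces G23_rules (B # ac m @ ca k) (B # ca (k - m))"
    using reduces_Cons[OF reduces_ac_ca[OF G23_base_rules_subset, of m k], of B] False by simp
  also have "reduces G23_rules \<dots> (ac (k - m) @ [B])"
    by (rule reduces_B_ca[OF G23_base_rules_subset])
  finally show ?thesis
    using reduces_in_context[OF reduces_ca_ac[OF G23_base_rules_subset, of m k], of "[]" "[B]"] False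
    by (auto intro: joinableI)
qed

lemma G23_family_overlap_joinable:
  assumes "B # ac m @ [B] = u @ s" "B # ac k @ [B] = s @ v" "s \<noteq> []"
  shows "joinable G23_rules (u @ ca k) (ca m @ v)"
proof (cases u)
  case Nil
  with assms(1) have "s = B # ac m @ [B]" by simp
  with assms(2) have "ac k @ [B] = ac m @ B # v" by simp
  then have "v = [] \<and> ac m = ac k"
    using B_notin_ac by (blast dest: snoc_eq_append_Cons_if_notin)
  then have "v = [] \<and> m = k"
    by (metis length_ac mult_left_cancel zero_neq_numeral)
  with Nil show ?thesis by (auto intro: joinableI)
next
  case (Cons x u')
  obtain s' where s: "s = B # s'"
    using assms(2,3) by (cases s) auto
  with assms(1) Cons have "ac m @ [B] = u' @ B # s'" by simp
  then have "s' = [] \<and> u' = ac m"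
    using B_notin_ac by (blast dest: snoc_eq_append_Cons_if_notin)
  with assms Cons s show ?thesis
    using joinable_B_ac_ca[of m k] by auto
qed

lemma G23_overlap_joinable:
  assumes "(l1, r1) \<in> G23_rules" "(l2, r2) \<in> G23_rules" "l1 = u @ s" "l2 = s @ v" "s \<noteq> []"
  shows "joinable G23_rules (u @ r2) (r1 @ v)"
  using assms(1)
proof (cases rule: G23_rules_cases)
  case base1: base
  from assms(2) show ?thesis
  proof (cases rule: G23_rules_cases)
    case base
    show ?thesis
      using base1 base assms(3-5) by (rule G23_base_overlap_joinable)
  next
    case (family k)
    then show ?thesis
      using G23_base_family_overlap_joinable[OF base1 assms(3) _ assms(5), of k v] assms(4) by simp
  qed
next
  case family1: (family m)
  from assms(2) show ?thesis
  proof (cases rule: G23_rules_cases)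
    case base
    then show ?thesis
      using G23_family_base_overlap_joinable[OF base _ assms(4,5) family1(1), of u] family1(2,3) assms(3)
      by simp
  next
    case (family k)
    then show ?thesis
      using G23_family_overlap_joinable[of m u s k v] family1(2,3) assms(3-5) by simp
  qed
qed

lemma nth_family_lhs_factor:
  assumes "B # ac m @ [B] = u @ x @ v" "j < length x"
  shows "x ! j = (if length u + j = 0 \<or> length u + j = 2 * m + 1 then B
      else if odd (length u + j) then A else C)"
proof -
  have "length u + j < 2 * m + 2"
    using arg_cong[OF assms(1), of length] assms(2) by simp
  moreover have "x ! j = (B # ac m @ [B]) ! (length u + j)"
    using assms by (simp add: nth_append)
  ultimately show ?thesis
    by (cases "length u + j") (auto simp: nth_append nth_ac)
qed

lemma family_lhs_has_no_base_factor:
  assumes "(l, r) \<in> G23_base_rules" "B # ac m @ [B] = u @ l @ v" "1 \<le> m"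
  shows False
proof -
  have len: "length u + length l \<le> 2 * m + 2"
    using arg_cong[OF assms(2), of length] by simp
  note letter = nth_family_lhs_factor[OF assms(2)]
  from assms(1) show False
    unfolding G23_base_rules_def
  proof (elim insertE emptyE; simp only: prod.inject; elim conjE)
    assume "l = [C, A, B]"
    then show False
      using letter[of 0] letter[of 1] letter[of 2] len by (auto split: if_splits) presburger
  qed (use letter[of 0] letter[of 1] len assms(3) in \<open>auto split: if_splits\<close>)
qed

lemma family_lhs_factor_family_lhs:
  assumes "B # ac m @ [B] = u @ (B # ac k @ [B]) @ v"
  shows "u = [] \<and> v = [] \<and> k = m"
proof -
  have len: "length u + 2 * k + 2 + length v = 2 * m + 2"
    using arg_cong[OF assms, of length] by simp
  note letter = nth_family_lhs_factor[OF assms]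
  have "length u = 0 \<or> length u = 2 * m + 1"
    using letter[of 0] by (auto split: if_splits)
  moreover have "length u + 2 * k + 1 = 0 \<or> length u + 2 * k + 1 = 2 * m + 1"
    using letter[of "2 * k + 1"] by (auto simp: nth_append split: if_splits)
  ultimately show ?thesis
    using len by auto
qed

lemma G23_lhs_factor_lhs:
  assumes "(l1, r1) \<in> G23_rules" "(l2, r2) \<in> G23_rules" "l1 = u @ l2 @ v"
  shows "u = [] \<and> v = [] \<and> r1 = r2"
  using assms(1)
proof (cases rule: G23_rules_cases)
  case base1: base
  from assms(2) show ?thesis
  proof (cases rule: G23_rules_cases)
    case base
    with base1 assms(3) show ?thesis
      unfolding G23_base_rules_def by (auto simp: Cons_eq_append_conv append_eq_Cons_conv)
  next
    case (family k)
    then show ?thesis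
      using length_base_lhs[OF base1] arg_cong[OF assms(3), of length] by simp
  qed
next
  case family1: (family m)
  from assms(2) show ?thesis
  proof (cases rule: G23_rules_cases)
    case base
    then show ?thesis
      using family_lhs_has_no_base_factor[OF base _ family1(1), of u v] family1(2) assms(3) by simp
  next
    case (family k)
    then show ?thesis
      using family_lhs_factor_family_lhs[of m u k v] family1 assms(3) by simp
  qed
qed

lemma G23_inclusion_joinable:
  assumes "(l1, r1) \<in> G23_rules" "(l2, r2) \<in> G23_rules" "l1 = u @ l2 @ v"
  shows "joinable G23_rules (u @ r2 @ v) r1"
  using G23_lhs_factor_lhs[OF assms] by (auto intro: joinableI)

theorem mainTheorem9:
  shows "ideal_gen (R_G23 :: 'k::field ncpoly set) = ideal_gen R'_G23 \<and>
         GS_basis (R'_G23 :: 'k::field ncpoly set)"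
proof
  show "ideal_gen (R_G23 :: 'k ncpoly set) = ideal_gen R'_G23"
    by (rule ideal_gen_R_G23_eq)
  show "GS_basis (R'_G23 :: 'k ncpoly set)"
    unfolding R'_G23_eq_binoms
    by (rule GS_basis_binoms[OF G23_rules_decrease G23_overlap_joinable G23_inclusion_joinable])
qed

end
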